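(* REFORM with the RPTSC reward scheme with at most $k=2$ pairings satisfies qualitative fairness: for any two agents $a_i,a_j$ with identical beliefs who submit the same report $y\in\mathcal{X}$ at the same time $t$, with TERM scores $\Omega_i\ge\Omega_j$, their expected rewards satisfy $\mathbb{E}[R_i(y,t)\mid\Omega_i]\ge\mathbb{E}[R_j(y,t)\mid\Omega_j]$.
   Context: Setting. $n\ge2$ tasks per round with common finite answer space $\mathcal{X}$; rewards are scaled by $\alpha>0$ and a decay factor $\beta(t)>0$. Each agent has a reputation (TERM) score $\Omega$. REFORM with RPTSC reward (at most two pairings): sample $n-1$ reports, one from each other task, and let $f(y)$ be the fraction equal to $y$; choose a random peer on the same task with report $y_p$ and score $\Omega_p$: if $y=y_p$ the reward is $\alpha\beta(t)(1/f(y)-1)$; otherwise, if the agent's score is $\le\Omega_p$ or two pairings have been used, the reward is $-\alpha\beta(t)$ (or $0$ if $f(y)=0$); otherwise a second peer is drawn. Beliefs (common to both agents): $q_y\in(0,1)$, the probability that a peer reports $y$; $q'_y\in(0,1)$, the probability that a peer on the same task reports $y$ given the agent's information; and peers' TERM scores follow a common distribution, so that an agent with score $\Omega$ believes a random peer has score below $\Omega$ with probability $T(\Omega)=\Pr(\Omega_p<\Omega)$, the same for every peer. The expected reward of an agent with score $\Omega$ reporting $y$ at time $t$ is $$\mathbb{E}[R(y,t)\mid\Omega]=\alpha\beta(t)\left[\frac{q'_y}{q_y}-1+T(\Omega)(1-q'_y)\frac{q'_y}{q_y}\right]\left[1-(1-q_y)^{n-1}\right].$$ *)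

theory Defs
  imports "HOL-Probability.Probability"
begin

text \<open>Belief that a random peer's TERM score is strictly below \<Omega>, where peers'
  scores follow the common distribution M (a probability measure on the reals).\<close>
definition peer_below :: "real measure \<Rightarrow> real \<Rightarrow> real" where
  "peer_below M \<Omega> = measure M {x. x < \<Omega>}"

text \<open>Expected RPTSC reward (at most two pairings) of an agent with TERM score \<Omega>
  reporting y at time t, with beliefs q (peer reports y), q' (same-task peer reports y
  given own information), peer-score distribution M, n tasks, scaling \<alpha>, decay \<beta>.\<close>
definition expected_reward ::
  "real \<Rightarrow> ('t \<Rightarrow> real) \<Rightarrow> nat \<Rightarrow> ('x \<Rightarrow> real) \<Rightarrow> ('x \<Rightarrow> real) \<Rightarrow> real measure
   \<Rightarrow> real \<Rightarrow> 'x \<Rightarrow> 't \<Rightarrow> real" where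
  "expected_reward \<alpha> \<beta> n q q' M \<Omega> y t =
     \<alpha> * \<beta> t * (q' y / q y - 1 + peer_below M \<Omega> * (1 - q' y) * (q' y / q y))
       * (1 - (1 - q y) ^ (n - 1))"

end

theory Submission
  imports Defs
begin

text \<open>The expected reward is affine in the belief T(\<Omega>) = peer_below M \<Omega> with
  slope \<alpha> \<beta>(t) (1 - q'_y) (q'_y / q_y) (1 - (1 - q_y)^(n-1)) \<ge> 0, and T is a
  cumulative distribution function, hence nondecreasing in \<Omega>.\<close>

lemma peer_below_mono:
  assumes "finite_measure M" and "sets M = sets borel" and "\<Omega>' \<le> \<Omega>"
  shows "peer_below M \<Omega>' \<le> peer_below M \<Omega>"
proof -
  interpret finite_measure M by fact
  have "{x. x < \<Omega>} \<in> sets M" using assms(2) by simp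
  then show ?thesis
    unfolding peer_below_def using assms(3) by (intro finite_measure_mono) auto
qed

lemma expected_reward_mono_peer_below:
  assumes "0 \<le> \<alpha> * \<beta> t" and "0 \<le> q y" and "q y \<le> 1" and "0 \<le> q' y" and "q' y \<le> 1"
    and "peer_below M' \<Omega>' \<le> peer_below M \<Omega>"
  shows "expected_reward \<alpha> \<beta> n q q' M' \<Omega>' y t \<le> expected_reward \<alpha> \<beta> n q q' M \<Omega> y t"
proof -
  have slope: "0 \<le> (1 - q' y) * (q' y / q y)" using assms(2,4,5) by simp
  have coverage: "0 \<le> 1 - (1 - q y) ^ (n - 1)"
    using assms(2,3) by (simp add: power_le_one)
  have "q' y / q y - 1 + peer_below M' \<Omega>' * ((1 - q' y) * (q' y / q y))
      \<le> q' y / q y - 1 + peer_below M \<Omega> * ((1 - q' y) * (q' y / q y))"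
    using mult_right_mono[OF assms(6) slope] by linarith
  then have "\<alpha> * \<beta> t * (q' y / q y - 1 + peer_below M' \<Omega>' * ((1 - q' y) * (q' y / q y)))
      * (1 - (1 - q y) ^ (n - 1))
    \<le> \<alpha> * \<beta> t * (q' y / q y - 1 + peer_below M \<Omega> * ((1 - q' y) * (q' y / q y)))
      * (1 - (1 - q y) ^ (n - 1))"
    using assms(1) coverage by (intro mult_right_mono mult_left_mono)
  then show ?thesis unfolding expected_reward_def by (simp add: mult.assoc)
qed

theorem theorem2:
  fixes \<alpha> :: real and \<beta> :: "'t \<Rightarrow> real" and n :: nat
    and q q' :: "'x::finite \<Rightarrow> real" and M :: "real measure"
    and \<Omega>i \<Omega>j :: real and y :: 'x and t :: 't
  assumes "n \<ge> 2" and "\<alpha> > 0" and "\<And>s. \<beta> s > 0"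
    and "\<And>x. 0 < q x \<and> q x < 1" and "\<And>x. 0 < q' x \<and> q' x < 1"
    and "prob_space M" and "sets M = sets borel"
    and "\<Omega>i \<ge> \<Omega>j"
  shows "expected_reward \<alpha> \<beta> n q q' M \<Omega>i y t \<ge> expected_reward \<alpha> \<beta> n q q' M \<Omega>j y t"
proof (rule expected_reward_mono_peer_below)
  show "0 \<le> \<alpha> * \<beta> t" using assms(2,3) by (simp add: less_imp_le)
  show "0 \<le> q y" "q y \<le> 1" using assms(4) by (simp_all add: less_imp_le)
  show "0 \<le> q' y" "q' y \<le> 1" using assms(5) by (simp_all add: less_imp_le)
  have "finite_measure M"
    using assms(6) by (simp add: prob_space_def)
  then show "peer_below M \<Omega>j \<le> peer_below M \<Omega>i"
    using assms(7,8) by (rule peer_below_mono)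
qed

end
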